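(* Let $\mathcal M$ be the class of multilayer networks with $d$ aspects having a common vertex set $L_0$ and common elementary-layer sets $L_1,\dots,L_d$, let $p\subseteq\{0,\dots,d\}$ be nonempty, let $U$ be a set, and let $\mathcal G_c$ be the class of vertex-colored graphs whose vertex sets are subsets of $U$. Let $f:\mathcal M\to\mathcal G_c$ and $g:P_p\to\mathrm{Sym}(U)$ satisfy: (1) $f$ and $g$ are injective; (2) for all $M,M'\in\mathcal M$ and $\gamma\in\mathrm{Sym}(U)$, if $f(M)^\gamma=f(M')$ then $\gamma\in g(P_p)$; (3) for all $M\in\mathcal M$ and all $\boldsymbol\zeta\in P_p$, $f(M^{\boldsymbol\zeta})=f(M)^{g(\boldsymbol\zeta)}$. Then for all $M,M'\in\mathcal M$, $\mathrm{Iso}_p(M,M')=g^{-1}(\mathrm{Iso}(f(M),f(M')))=\{\boldsymbol\zeta\in P_p: g(\boldsymbol\zeta)\in\mathrm{Iso}(f(M),f(M'))\}$.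
   Context: A multilayer network with $d$ aspects is $M=(V_M,E_M,V,\mathbf L)$ with $\mathbf L=(L_1,\dots,L_d)$, $V_M\subseteq V\times L_1\times\dots\times L_d$, $E_M\subseteq V_M\times V_M$; write $L_0=V$ and $\mathbf v=(v_0,\dots,v_d)$. For nonempty $p\subseteq\{0,\dots,d\}$, $P_p=D_0\times\dots\times D_d$ with $D_a$ the symmetric group on $L_a$ if $a\in p$ and the trivial group on $L_a$ otherwise. For $\boldsymbol\zeta\in P_p$, $\mathbf v^{\boldsymbol\zeta}=(\zeta_0(v_0),\dots,\zeta_d(v_d))$ and $M^{\boldsymbol\zeta}=(\{\mathbf v^{\boldsymbol\zeta}:\mathbf v\in V_M\},\{(\mathbf v^{\boldsymbol\zeta},\mathbf u^{\boldsymbol\zeta}):(\mathbf v,\mathbf u)\in E_M\},V,\mathbf L)$; $\mathrm{Iso}_p(M,M')=\{\boldsymbol\zeta\in P_p:M^{\boldsymbol\zeta}=M'\}$. A vertex-colored graph is $G=(V_c,E_c,\pi,C)$ with $E_c\subseteq V_c\times V_c$ and $\pi:V_c\to C$. For a permutation $\gamma$ of $U$ and $V_c\subseteq U$, $G^\gamma=(\gamma(V_c),\{(\gamma(v),\gamma(u)):(v,u)\in E_c\},\pi\circ\gamma^{-1},C)$, and $\mathrm{Iso}(G,G')=\{\gamma\in\mathrm{Sym}(U):G^\gamma=G'\}$. *)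

theory Defs
  imports "HOL-Combinatorics.Permutations" "HOL-Library.FuncSet"
begin

text \<open>Common layer sets: L 0 = V (vertices), L 1, ..., L d elementary layers,
all of a common element type 'a.  A node-layer tuple is a list of length d+1.\<close>

definition tuples :: "nat \<Rightarrow> (nat \<Rightarrow> 'a set) \<Rightarrow> 'a list set" where
  "tuples d L = {v. length v = Suc d \<and> (\<forall>a\<le>d. v ! a \<in> L a)}"

text \<open>A multilayer network with fixed V and L is determined by (V_M, E_M).\<close>
type_synonym 'a mlnet = "'a list set \<times> ('a list \<times> 'a list) set"

definition mlnet_class :: "nat \<Rightarrow> (nat \<Rightarrow> 'a set) \<Rightarrow> 'a mlnet set" where
  "mlnet_class d L = {(VM, EM). VM \<subseteq> tuples d L \<and> EM \<subseteq> VM \<times> VM}"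

definition Pp :: "nat \<Rightarrow> (nat \<Rightarrow> 'a set) \<Rightarrow> nat set \<Rightarrow> (nat \<Rightarrow> 'a \<Rightarrow> 'a) set" where
  "Pp d L p = {\<zeta>. (\<forall>a. (a \<le> d \<and> a \<in> p) \<longrightarrow> \<zeta> a permutes L a)
                 \<and> (\<forall>a. \<not> (a \<le> d \<and> a \<in> p) \<longrightarrow> \<zeta> a = id)}"

definition tuple_act :: "(nat \<Rightarrow> 'a \<Rightarrow> 'a) \<Rightarrow> 'a list \<Rightarrow> 'a list" where
  "tuple_act \<zeta> v = map (\<lambda>a. \<zeta> a (v ! a)) [0..<length v]"

definition net_act :: "'a mlnet \<Rightarrow> (nat \<Rightarrow> 'a \<Rightarrow> 'a) \<Rightarrow> 'a mlnet" where
  "net_act M \<zeta> = (tuple_act \<zeta> ` fst M,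
                   (\<lambda>(v, u). (tuple_act \<zeta> v, tuple_act \<zeta> u)) ` snd M)"

definition Iso_p :: "nat \<Rightarrow> (nat \<Rightarrow> 'a set) \<Rightarrow> nat set \<Rightarrow> 'a mlnet \<Rightarrow> 'a mlnet
                      \<Rightarrow> (nat \<Rightarrow> 'a \<Rightarrow> 'a) set" where
  "Iso_p d L p M M' = {\<zeta> \<in> Pp d L p. net_act M \<zeta> = M'}"

text \<open>Vertex-colored graphs (V_c, E_c, pi, C).  The coloring pi is taken
extensional on V_c (undefined outside), so that graph equality is meaningful.\<close>
record ('u, 'c) cgraph =
  cverts :: "'u set"
  cedges :: "('u \<times> 'u) set"
  ccol :: "'u \<Rightarrow> 'c"
  ccolors :: "'c set"

definition cgraph_class :: "'u set \<Rightarrow> ('u, 'c) cgraph set" where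
  "cgraph_class U = {G. cverts G \<subseteq> U \<and> cedges G \<subseteq> cverts G \<times> cverts G
                      \<and> ccol G \<in> cverts G \<rightarrow>\<^sub>E ccolors G}"

definition graph_act :: "('u, 'c) cgraph \<Rightarrow> ('u \<Rightarrow> 'u) \<Rightarrow> ('u, 'c) cgraph" where
  "graph_act G \<gamma> = \<lparr> cverts = \<gamma> ` cverts G,
                     cedges = (\<lambda>(v, u). (\<gamma> v, \<gamma> u)) ` cedges G,
                     ccol = restrict (ccol G \<circ> inv \<gamma>) (\<gamma> ` cverts G),
                     ccolors = ccolors G \<rparr>"

definition Iso_g :: "'u set \<Rightarrow> ('u, 'c) cgraph \<Rightarrow> ('u, 'c) cgraph \<Rightarrow> ('u \<Rightarrow> 'u) set" where
  "Iso_g U G G' = {\<gamma>. \<gamma> permutes U \<and> graph_act G \<gamma> = G'}"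

end

theory Submission
  imports Defs
begin

text \<open>Since \<open>f\<close> is injective on \<open>\<M>\<close> and \<open>\<M>\<close> is closed under \<open>P\<^sub>p\<close>, the equation
  \<open>M\<^sup>\<zeta> = M'\<close> is equivalent to \<open>f(M\<^sup>\<zeta>) = f(M')\<close>, which by equivariance (3) reads
  \<open>f(M)\<^bsup>g(\<zeta>)\<^esup> = f(M')\<close>, i.e. \<open>g(\<zeta>) \<in> Iso(f(M), f(M'))\<close>.\<close>

lemma tuple_act_in_tuples:
  assumes "\<zeta> \<in> Pp d L p" and "v \<in> tuples d L"
  shows "tuple_act \<zeta> v \<in> tuples d L"
proof -
  have "\<zeta> a (v ! a) \<in> L a" if "a \<le> d" for a
  proof (cases "a \<in> p")
    case True
    then have "\<zeta> a permutes L a" using assms(1) that by (simp add: Pp_def)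
    then show ?thesis using assms(2) that by (simp add: tuples_def permutes_in_image)
  next
    case False
    then have "\<zeta> a = id" using assms(1) that by (simp add: Pp_def)
    then show ?thesis using assms(2) that by (simp add: tuples_def)
  qed
  then show ?thesis using assms(2) unfolding tuples_def tuple_act_def
    by (simp del: upt_Suc add: nth_map_upt)
qed

lemma net_act_in_mlnet_class:
  assumes "\<zeta> \<in> Pp d L p" and "M \<in> mlnet_class d L"
  shows "net_act M \<zeta> \<in> mlnet_class d L"
  using assms tuple_act_in_tuples[OF assms(1)]
  unfolding mlnet_class_def net_act_def by (auto split: prod.splits)

lemma net_act_eq_iff_in_Iso_g:
  assumes f_inj: "inj_on f (mlnet_class d L)"
    and equivariant: "f (net_act M \<zeta>) = graph_act (f M) (g \<zeta>)"
    and g_perm: "g \<zeta> permutes U"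
    and \<zeta>: "\<zeta> \<in> Pp d L p"
    and M: "M \<in> mlnet_class d L" and M': "M' \<in> mlnet_class d L"
  shows "net_act M \<zeta> = M' \<longleftrightarrow> g \<zeta> \<in> Iso_g U (f M) (f M')"
proof -
  have "net_act M \<zeta> = M' \<longleftrightarrow> f (net_act M \<zeta>) = f M'"
    using inj_onD[OF f_inj] net_act_in_mlnet_class[OF \<zeta> M] M' by blast
  also have "\<dots> \<longleftrightarrow> graph_act (f M) (g \<zeta>) = f M'"
    by (simp only: equivariant)
  finally show ?thesis using g_perm by (simp add: Iso_g_def)
qed

theorem lemma1:
  fixes d :: nat and L :: "nat \<Rightarrow> 'a set" and p :: "nat set" and U :: "'u set"
    and f :: "'a mlnet \<Rightarrow> ('u, 'c) cgraph"
    and g :: "(nat \<Rightarrow> 'a \<Rightarrow> 'a) \<Rightarrow> ('u \<Rightarrow> 'u)"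
  assumes p_ne: "p \<noteq> {}" and p_sub: "p \<subseteq> {0..d}"
    and f_into: "\<forall>M \<in> mlnet_class d L. f M \<in> cgraph_class U"
    and g_into: "\<forall>\<zeta> \<in> Pp d L p. g \<zeta> permutes U"
    and f_inj: "inj_on f (mlnet_class d L)"
    and g_inj: "inj_on g (Pp d L p)"
    and cond2: "\<forall>M \<in> mlnet_class d L. \<forall>M' \<in> mlnet_class d L. \<forall>\<gamma>.
                  \<gamma> permutes U \<longrightarrow> graph_act (f M) \<gamma> = f M' \<longrightarrow> \<gamma> \<in> g ` Pp d L p"
    and cond3: "\<forall>M \<in> mlnet_class d L. \<forall>\<zeta> \<in> Pp d L p.
                  f (net_act M \<zeta>) = graph_act (f M) (g \<zeta>)"
  shows "\<forall>M \<in> mlnet_class d L. \<forall>M' \<in> mlnet_class d L.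
           Iso_p d L p M M' = Pp d L p \<inter> g -` Iso_g U (f M) (f M')
         \<and> Pp d L p \<inter> g -` Iso_g U (f M) (f M')
             = {\<zeta> \<in> Pp d L p. g \<zeta> \<in> Iso_g U (f M) (f M')}"
proof (intro ballI conjI)
  fix M M' assume M: "M \<in> mlnet_class d L" and M': "M' \<in> mlnet_class d L"
  have "net_act M \<zeta> = M' \<longleftrightarrow> g \<zeta> \<in> Iso_g U (f M) (f M')" if "\<zeta> \<in> Pp d L p" for \<zeta>
    using net_act_eq_iff_in_Iso_g[OF f_inj _ _ that M M'] cond3 g_into M that by blast
  then show "Iso_p d L p M M' = Pp d L p \<inter> g -` Iso_g U (f M) (f M')"
    unfolding Iso_p_def by blast
  show "Pp d L p \<inter> g -` Iso_g U (f M) (f M') = {\<zeta> \<in> Pp d L p. g \<zeta> \<in> Iso_g U (f M) (f M')}"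
    by blast
qed

end
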